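(* Let $a>b\geq 1$ be coprime integers and $p=a/b$ (so $p>1$). Let $\hat n$ be a positive integer, let $N=(2^b+2)\hat n$, and let $S$ be the multiset of binary strings of length $N$ consisting of one copy of $\mathbf{1}_{(2^b+1)\hat n}\circ\mathbf{0}_{\hat n}$ and $2^{a-b}$ copies of $\mathbf{0}_{N}$. For every string $s^*\in\{0,1\}^{N}$: (1) if $d(s^*,\mathbf{0}_N)=\hat n$ and $\mathrm{hs}(s^*,\mathbf{0}_N)\subseteq[(2^b+1)\hat n]$, then $\sum_{s\in S} d(s^*,s)^p=(2^a+2^{a-b})\hat n^{p}$; (2) if $d(s^*,\mathbf{0}_N)\neq\hat n$ or $\mathrm{hs}(s^*,\mathbf{0}_N)\not\subseteq[(2^b+1)\hat n]$, then $\sum_{s\in S} d(s^*,s)^p>(2^a+2^{a-b})\hat n^{p}$. (Sums over $S$ count multiplicities.)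
   Context: For binary strings $s,s'$ of equal length $n$, $d(s,s')$ denotes their Hamming distance (number of positions where they differ) and $\mathrm{hs}(s,s')=\{j\in[n]: s[j]\neq s'[j]\}$ is their Hamming set. $[t]=\{1,\dots,t\}$. $\mathbf{0}_\ell$ and $\mathbf{1}_\ell$ denote the all-zero and all-one strings of length $\ell$, and $\circ$ denotes concatenation. *)

theory Defs
  imports Complex_Main "HOL-Library.Multiset"
begin

text \<open>Binary strings of length n are modelled as bool lists of length n (True = 1).
  Positions are 1-indexed as in the paper.\<close>

definition hamming_set :: "bool list \<Rightarrow> bool list \<Rightarrow> nat set" where
  "hamming_set s t = {j \<in> {1..length s}. s ! (j - 1) \<noteq> t ! (j - 1)}"

definition hamming_dist :: "bool list \<Rightarrow> bool list \<Rightarrow> nat" where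
  "hamming_dist s t = card (hamming_set s t)"

definition zeros :: "nat \<Rightarrow> bool list" where
  "zeros l = replicate l False"

definition ones :: "nat \<Rightarrow> bool list" where
  "ones l = replicate l True"

end

theory Submission imports Defs begin

text \<open>Write \<open>M = (2^b+1) n\<close>, \<open>x\<close> and \<open>y\<close> for the numbers of ones of \<open>s*\<close> inside and outside
  \<open>[M]\<close>. Then the cost is \<open>c (x+y)^p + (M - x + y)^p\<close> with \<open>c = 2^(a-b) = B^(p-1)\<close>, \<open>B = 2^b\<close>.
  The strictly convex function \<open>k \<mapsto> c k^p + (M - k)^p\<close> on \<open>[0, M]\<close> has its minimum where
  \<open>(M - k)^(p-1) = (B k)^(p-1)\<close>, i.e. at \<open>k = n\<close>, with value \<open>(2^a + 2^(a-b)) n^p\<close>; any \<open>y > 0\<close>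
  only increases the second summand.\<close>

lemma powr_gt_tangent_line:
  fixes u v p :: real
  assumes "u \<ge> 0" "v > 0" "u \<noteq> v" "p > 1"
  shows "u powr p > v powr p + p * v powr (p - 1) * (u - v)"
proof (cases "u = 0")
  case True
  have "v powr p = v powr (p - 1) * v" using assms by (simp add: powr_diff)
  moreover have "v powr (p - 1) > 0" using assms by simp
  ultimately show ?thesis using True assms by (simp add: algebra_simps)
next
  case False
  hence u: "u > 0" using assms by simp
  have deriv: "\<And>z. z > 0 \<Longrightarrow> DERIV (\<lambda>z. z powr p) z :> p * z powr (p - 1)"
    by (rule has_real_derivative_powr)
  show ?thesis
  proof (cases "v < u")
    case True
    obtain z where z: "v < z" "z < u" "u powr p - v powr p = (u - v) * (p * z powr (p - 1))"
      using MVT2[of v u "\<lambda>z. z powr p" "\<lambda>z. p * z powr (p - 1)"] True deriv assms by force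
    have "v powr (p - 1) < z powr (p - 1)" using z assms by (intro powr_less_mono2) auto
    hence "p * v powr (p - 1) * (u - v) < p * z powr (p - 1) * (u - v)" using True assms by simp
    thus ?thesis using z by (simp add: algebra_simps)
  next
    case False
    hence "u < v" using assms by simp
    obtain z where z: "u < z" "z < v" "v powr p - u powr p = (v - u) * (p * z powr (p - 1))"
      using MVT2[of u v "\<lambda>z. z powr p" "\<lambda>z. p * z powr (p - 1)"] \<open>u < v\<close> deriv u by force
    have "z powr (p - 1) < v powr (p - 1)" using z u assms by (intro powr_less_mono2) auto
    hence "p * z powr (p - 1) * (v - u) < p * v powr (p - 1) * (v - u)" using \<open>u < v\<close> assms by simp
    thus ?thesis using z by (simp add: algebra_simps)
  qed
qed

text \<open>Adding the tangent-line bounds at \<open>n\<close> and at \<open>B n\<close>: the linear terms cancel because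
  \<open>c n^(p-1) = (B n)^(p-1)\<close>.\<close>

lemma weighted_powr_sum_gt_min:
  fixes c n B p k :: real
  assumes "n > 0" "B > 0" "p > 1" "B powr (p - 1) = c"
    and "0 \<le> k" "k \<le> (B + 1) * n" "k \<noteq> n"
  shows "c * k powr p + ((B + 1) * n - k) powr p > c * n powr p + (B * n) powr p"
proof -
  have "c > 0" using assms by auto
  have tangent_n: "k powr p > n powr p + p * n powr (p - 1) * (k - n)"
    using powr_gt_tangent_line[of k n p] assms by auto
  have tangent_Bn: "((B + 1) * n - k) powr p > (B * n) powr p + p * (B * n) powr (p - 1) * (n - k)"
    using powr_gt_tangent_line[of "(B + 1) * n - k" "B * n" p] assms by (auto simp: algebra_simps)
  have "(B * n) powr (p - 1) = c * n powr (p - 1)"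
    using assms by (simp add: powr_mult)
  moreover have "c * k powr p > c * (n powr p + p * n powr (p - 1) * (k - n))"
    using tangent_n \<open>c > 0\<close> by simp
  ultimately show ?thesis using tangent_Bn by (simp add: algebra_simps)
qed

lemma weighted_powr_sum_ge_min:
  fixes c n B p k :: real
  assumes "n > 0" "B > 0" "p > 1" "B powr (p - 1) = c" "0 \<le> k" "k \<le> (B + 1) * n"
  shows "c * k powr p + ((B + 1) * n - k) powr p \<ge> c * n powr p + (B * n) powr p"
  using weighted_powr_sum_gt_min[OF assms] by (cases "k = n") (auto simp: algebra_simps)

lemma cost_gt_min:
  fixes c n B p x y :: real
  assumes "n > 0" "B > 0" "p > 1" "B powr (p - 1) = c"
    and "0 \<le> x" "x \<le> (B + 1) * n" "0 \<le> y" "x + y \<noteq> n \<or> y \<noteq> 0"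
  shows "c * (x + y) powr p + ((B + 1) * n - x + y) powr p > c * n powr p + (B * n) powr p"
proof (cases "x + y \<le> (B + 1) * n")
  case True
  have second_term_mono: "((B + 1) * n - (x + y)) powr p \<le> ((B + 1) * n - x + y) powr p"
    using True assms by (intro powr_mono2) auto
  show ?thesis
  proof (cases "y = 0")
    case True
    then show ?thesis
      using weighted_powr_sum_gt_min[of n B p c x] assms by simp
  next
    case False
    have "((B + 1) * n - (x + y)) powr p < ((B + 1) * n - x + y) powr p"
      using False True assms by (intro powr_less_mono2) auto
    moreover have "c * (x + y) powr p + ((B + 1) * n - (x + y)) powr p \<ge> c * n powr p + (B * n) powr p"
      using weighted_powr_sum_ge_min[of n B p c "x + y"] True assms by simp
    ultimately show ?thesis by simp
  qed
next
  case False
  have "c > 0" using assms by auto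
  have "c * ((B + 1) * n) powr p \<ge> c * n powr p + (B * n) powr p"
    using weighted_powr_sum_ge_min[of n B p c "(B + 1) * n"] assms by simp
  moreover have "((B + 1) * n) powr p < (x + y) powr p"
    using False assms by (intro powr_less_mono2) auto
  hence "c * ((B + 1) * n) powr p < c * (x + y) powr p" using \<open>c > 0\<close> by simp
  moreover have "((B + 1) * n - x + y) powr p \<ge> 0" by simp
  ultimately show ?thesis by linarith
qed

lemma two_power_powr_ratio:
  assumes "b > 0"
  shows "(2 ^ b :: real) powr (real a / real b) = 2 ^ a"
proof -
  have "(2 ^ b :: real) powr (real a / real b) = 2 powr (real b * (real a / real b))"
    by (simp add: powr_realpow[symmetric] powr_powr)
  also have "\<dots> = 2 ^ a" using assms by (simp add: powr_realpow)
  finally show ?thesis .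
qed

lemma two_power_powr_ratio_minus_one:
  assumes "0 < b" "b \<le> a"
  shows "(2 ^ b :: real) powr (real a / real b - 1) = 2 ^ (a - b)"
  using assms by (simp add: powr_diff two_power_powr_ratio power_diff)

lemma hamming_set_zeros:
  assumes "length s = n"
  shows "hamming_set s (zeros n) = {j \<in> {1..n}. s ! (j - 1)}"
  using assms by (auto simp: hamming_set_def zeros_def)

lemma hamming_dist_zeros_ones_split:
  fixes s :: "bool list"
  assumes "length s = M + n"
  defines "H \<equiv> hamming_set s (zeros (M + n))"
  shows "hamming_dist s (zeros (M + n)) = card (H \<inter> {1..M}) + card (H - {1..M})"
    and "hamming_dist s (ones M @ zeros n) = (M - card (H \<inter> {1..M})) + card (H - {1..M})"
    and "card (H \<inter> {1..M}) \<le> M"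
proof -
  have H: "H = {j \<in> {1..M + n}. s ! (j - 1)}"
    unfolding H_def using assms(1) by (rule hamming_set_zeros)
  hence "finite H" by simp
  have "H = (H \<inter> {1..M}) \<union> (H - {1..M})" by blast
  with \<open>finite H\<close> have "card H = card (H \<inter> {1..M}) + card (H - {1..M})"
    by (metis card_Un_disjoint finite_Diff finite_Int Diff_disjoint Int_Diff_disjoint inf_commute)
  thus "hamming_dist s (zeros (M + n)) = card (H \<inter> {1..M}) + card (H - {1..M})"
    by (simp add: hamming_dist_def H_def)
  have "hamming_set s (ones M @ zeros n) = ({1..M} - (H \<inter> {1..M})) \<union> (H - {1..M})"
    unfolding H using assms(1) by (auto simp: hamming_set_def ones_def zeros_def nth_append)
  moreover have "card (({1..M} - (H \<inter> {1..M})) \<union> (H - {1..M}))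
      = (M - card (H \<inter> {1..M})) + card (H - {1..M})"
    using \<open>finite H\<close> by (subst card_Un_disjoint) (auto simp: card_Diff_subset)
  ultimately show "hamming_dist s (ones M @ zeros n) = (M - card (H \<inter> {1..M})) + card (H - {1..M})"
    by (simp add: hamming_dist_def)
  show "card (H \<inter> {1..M}) \<le> M"
    using card_mono[of "{1..M}" "H \<inter> {1..M}"] by simp
qed

theorem lemma1:
  fixes a b nh :: nat
  assumes "b \<ge> 1" and "a > b" and "coprime a b" and "nh > 0"
  defines "p \<equiv> real a / real b"
      and "N \<equiv> (2 ^ b + 2) * nh"
      and "S \<equiv> add_mset (ones ((2 ^ b + 1) * nh) @ zeros nh)
                 (replicate_mset (2 ^ (a - b)) (zeros ((2 ^ b + 2) * nh)))"
  assumes "length s' = N"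
  shows "(hamming_dist s' (zeros N) = nh \<and> hamming_set s' (zeros N) \<subseteq> {1..(2 ^ b + 1) * nh}
            \<longrightarrow> (\<Sum>s\<in>#S. real (hamming_dist s' s) powr p) = (2 ^ a + 2 ^ (a - b)) * real nh powr p)
       \<and> (hamming_dist s' (zeros N) \<noteq> nh \<or> \<not> hamming_set s' (zeros N) \<subseteq> {1..(2 ^ b + 1) * nh}
            \<longrightarrow> (\<Sum>s\<in>#S. real (hamming_dist s' s) powr p) > (2 ^ a + 2 ^ (a - b)) * real nh powr p)"
proof -
  define M where "M = (2 ^ b + 1) * nh"
  define H where "H = hamming_set s' (zeros N)"
  define x where "x = card (H \<inter> {1..M})"
  define y where "y = card (H - {1..M})"
  define B :: real where "B = 2 ^ b"
  have N: "N = M + nh" unfolding N_def M_def by simp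
  have M: "real M = (B + 1) * real nh" by (simp add: M_def B_def algebra_simps)
  have counts: "hamming_dist s' (zeros N) = x + y" "hamming_dist s' (ones M @ zeros nh) = M - x + y"
    "x \<le> M"
    using hamming_dist_zeros_ones_split[of s' M nh] assms(8)
    unfolding x_def y_def H_def N by simp_all
  have cost: "(\<Sum>s\<in>#S. real (hamming_dist s' s) powr p)
      = 2 ^ (a - b) * real (x + y) powr p + ((B + 1) * real nh - real x + real y) powr p"
  proof -
    have "S = add_mset (ones M @ zeros nh) (replicate_mset (2 ^ (a - b)) (zeros N))"
      by (simp add: S_def M_def N_def)
    then show ?thesis using counts M by (simp add: of_nat_diff algebra_simps)
  qed
  have min: "(2 ^ a + 2 ^ (a - b)) * real nh powr p = 2 ^ (a - b) * real nh powr p + (B * real nh) powr p"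
    using assms(1) by (simp add: B_def p_def powr_mult two_power_powr_ratio algebra_simps)
  have optimal_iff: "hamming_dist s' (zeros N) = nh \<and> H \<subseteq> {1..M} \<longleftrightarrow> x + y = nh \<and> y = 0"
    using counts by (auto simp: y_def H_def hamming_set_def)
  have "B powr (p - 1) = 2 ^ (a - b)"
    using assms(1,2) by (simp add: B_def p_def two_power_powr_ratio_minus_one)
  moreover have "real x \<le> (B + 1) * real nh"
    using counts M by linarith
  moreover have "p > 1" using assms(1,2) by (simp add: p_def)
  ultimately show ?thesis
    using cost_gt_min[of "real nh" B p "2 ^ (a - b)" "real x" "real y"] assms(4) optimal_iff
    unfolding cost min H_def M_def by (auto simp: B_def algebra_simps)
qed

end
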